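(* Let $G$ be a finite simple graph of order $n$ without isolated vertices, with minimum degree $\delta$ and maximum degree $\Delta$. Let $f$ be a minimum STDF of $G$ (i.e. an STDF with $f(V(G))=\gamma_{st}(G)$), and let $V_+=\{v: f(v)=1\}$, $V_-=\{v:f(v)=-1\}$, $E_+=|E(G[V_+])|$, $E_-=|E(G[V_-])|$, let $[V_+,V_-]$ be the set of edges with one end in $V_+$ and the other in $V_-$, and let $V_e$ be the set of vertices of even degree. Then (a) $\left(\lfloor\frac{\delta}{2}\rfloor+1\right)|V_-|\leq |[V_+,V_-]|\leq\left(\lceil\frac{\Delta}{2}\rceil-1\right)|V_+|$; (b) $n+|V_-|+4E_-+|V_e|\leq 2E_++|[V_+,V_-]|$.
   Context: For a vertex $v$, $N(v)$ is its open neighborhood. A signed total dominating function (STDF) of $G$ is a function $f:V(G)\to\{-1,1\}$ such that $\sum_{u\in N(v)}f(u)\geq 1$ for every vertex $v$; the signed total domination number $\gamma_{st}(G)$ is the minimum of $\sum_{v\in V(G)}f(v)$ over all STDFs $f$ of $G$. $G[X]$ denotes the subgraph induced by $X$. *)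

theory Defs
  imports Complex_Main
begin

definition simple_graph :: "'a set \<Rightarrow> ('a \<Rightarrow> 'a \<Rightarrow> bool) \<Rightarrow> bool" where
  "simple_graph V E \<longleftrightarrow> finite V \<and> (\<forall>u v. E u v \<longrightarrow> u \<in> V \<and> v \<in> V)
     \<and> (\<forall>u v. E u v \<longrightarrow> E v u) \<and> (\<forall>v. \<not> E v v)"

definition nbhd :: "('a \<Rightarrow> 'a \<Rightarrow> bool) \<Rightarrow> 'a \<Rightarrow> 'a set" where
  "nbhd E v = {u. E v u}"

definition deg :: "('a \<Rightarrow> 'a \<Rightarrow> bool) \<Rightarrow> 'a \<Rightarrow> nat" where
  "deg E v = card (nbhd E v)"

definition min_deg :: "'a set \<Rightarrow> ('a \<Rightarrow> 'a \<Rightarrow> bool) \<Rightarrow> nat" where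
  "min_deg V E = Min (deg E ` V)"

definition max_deg :: "'a set \<Rightarrow> ('a \<Rightarrow> 'a \<Rightarrow> bool) \<Rightarrow> nat" where
  "max_deg V E = Max (deg E ` V)"

definition stdf :: "'a set \<Rightarrow> ('a \<Rightarrow> 'a \<Rightarrow> bool) \<Rightarrow> ('a \<Rightarrow> int) \<Rightarrow> bool" where
  "stdf V E f \<longleftrightarrow> (\<forall>v\<in>V. f v = 1 \<or> f v = -1) \<and> (\<forall>v\<in>V. (\<Sum>u\<in>nbhd E v. f u) \<ge> 1)"

definition gamma_st :: "'a set \<Rightarrow> ('a \<Rightarrow> 'a \<Rightarrow> bool) \<Rightarrow> int" where
  "gamma_st V E = Min {(\<Sum>v\<in>V. f v) | f. stdf V E f}"

definition edges_between :: "('a \<Rightarrow> 'a \<Rightarrow> bool) \<Rightarrow> 'a set \<Rightarrow> 'a set \<Rightarrow> 'a set set" where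
  "edges_between E A B = {{u, v} | u v. u \<in> A \<and> v \<in> B \<and> E u v}"

definition induced_edges :: "('a \<Rightarrow> 'a \<Rightarrow> bool) \<Rightarrow> 'a set \<Rightarrow> 'a set set" where
  "induced_edges E A = edges_between E A A"

end

theory Submission
  imports Defs
begin

text \<open>Only the local condition at each vertex is used: there the neighbourhood sum of a
  signed total dominating function equals (number of neighbours in \<open>V\<^sub>+\<close>) minus (number of
  neighbours in \<open>V\<^sub>-\<close>), which is at least 1, has the parity of the degree, and is therefore at
  least 2 at vertices of even degree. Summing the number of neighbours in \<open>V\<^sub>-\<close> over \<open>V\<^sub>+\<close>,
  resp. the number of neighbours in \<open>V\<^sub>+\<close> over \<open>V\<^sub>-\<close>, counts the cut edges and gives (a).
  Summing this local difference over all of \<open>V\<close> gives \<open>2E\<^sub>+ - 2E\<^sub>-\<close>, since cut edges cancel, so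
  \<open>2E\<^sub>+ - 2E\<^sub>- \<ge> n + |V\<^sub>e|\<close>; the partial sum over \<open>V\<^sub>-\<close> is \<open>|[V\<^sub>+,V\<^sub>-]| - 2E\<^sub>- \<ge> |V\<^sub>-|\<close>, and
  adding the two gives (b).\<close>

lemma card_edges_between_disjoint:
  assumes "finite A" "finite B" "A \<inter> B = {}"
  shows "card (edges_between E A B) = (\<Sum>a\<in>A. card (nbhd E a \<inter> B))"
proof -
  have pairs: "edges_between E A B = (\<lambda>(u, v). {u, v}) ` (SIGMA a:A. nbhd E a \<inter> B)"
    by (auto simp: edges_between_def nbhd_def)
  have "inj_on (\<lambda>(u, v). {u, v}) (SIGMA a:A. nbhd E a \<inter> B)"
    using assms(3) by (auto simp: inj_on_def doubleton_eq_iff)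
  then show ?thesis
    using assms(1,2) by (simp add: pairs card_image)
qed

lemma edges_between_commute:
  assumes "\<And>u v. E u v \<Longrightarrow> E v u"
  shows "edges_between E A B = edges_between E B A"
  using assms unfolding edges_between_def by (auto simp: insert_commute)

lemma double_card_induced_edges:
  assumes "finite A" and sym: "\<And>u v. E u v \<Longrightarrow> E v u" and irrefl: "\<And>v. \<not> E v v"
  shows "2 * card (induced_edges E A) = (\<Sum>a\<in>A. card (nbhd E a \<inter> A))"
proof -
  let ?P = "SIGMA a:A. nbhd E a \<inter> A" and ?edge = "\<lambda>(u::'a, v). {u, v}"
  have fin: "finite ?P"
    using assms(1) by auto
  have edges: "induced_edges E A = ?edge ` ?P"
    by (auto simp: induced_edges_def edges_between_def nbhd_def)
  have two_preimages: "card {p \<in> ?P. ?edge p = e} = 2" if "e \<in> ?edge ` ?P" for e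
  proof -
    obtain a b where ab: "(a, b) \<in> ?P" "e = {a, b}"
      using \<open>e \<in> ?edge ` ?P\<close> by auto
    then have "a \<noteq> b"
      using irrefl by (auto simp: nbhd_def)
    moreover have "{p \<in> ?P. ?edge p = e} = {(a, b), (b, a)}"
      using ab sym by (auto simp: nbhd_def doubleton_eq_iff)
    ultimately show ?thesis
      by simp
  qed
  have "(\<Sum>a\<in>A. card (nbhd E a \<inter> A)) = card ?P"
    using assms(1) by simp
  also have "\<dots> = (\<Sum>e\<in>?edge ` ?P. card {p \<in> ?P. ?edge p = e})"
    using sum.image_gen[OF fin, of "\<lambda>_. 1" ?edge] by (simp only: card_eq_sum)
  also have "\<dots> = 2 * card (induced_edges E A)"
    by (simp add: two_preimages edges)
  finally show ?thesis ..
qed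

lemma floor_half_of_nat: "\<lfloor>real n / 2\<rfloor> = int (n div 2)"
  using floor_divide_of_nat_eq[of n 2] by simp

lemma ceiling_half_of_nat: "\<lceil>real n / 2\<rceil> = int ((n + 1) div 2)"
proof -
  have "\<lceil>real n / 2\<rceil> = - ((- int n) div 2)"
    using floor_divide_of_int_eq[of "- int n" 2] by (simp add: ceiling_def)
  then show ?thesis
    by presburger
qed

locale stdf_graph =
  fixes V :: "'a set" and E :: "'a \<Rightarrow> 'a \<Rightarrow> bool" and f :: "'a \<Rightarrow> int"
  assumes graph: "simple_graph V E" and stdf: "stdf V E f"
begin

abbreviation V_plus :: "'a set" where "V_plus \<equiv> {v \<in> V. f v = 1}"
abbreviation V_minus :: "'a set" where "V_minus \<equiv> {v \<in> V. f v = -1}"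

abbreviation plus_deg :: "'a \<Rightarrow> nat" where "plus_deg v \<equiv> card (nbhd E v \<inter> V_plus)"
abbreviation minus_deg :: "'a \<Rightarrow> nat" where "minus_deg v \<equiv> card (nbhd E v \<inter> V_minus)"

abbreviation cut_size :: nat where "cut_size \<equiv> card (edges_between E V_plus V_minus)"

lemma finite_V: "finite V"
  using graph by (simp add: simple_graph_def)

lemma edge_sym: "E u v \<Longrightarrow> E v u"
  using graph by (simp add: simple_graph_def)

lemma edge_irrefl: "\<not> E v v"
  using graph by (simp add: simple_graph_def)

lemma V_eq_Un: "V = V_plus \<union> V_minus"
  using stdf by (auto simp: stdf_def)

lemma finite_nbhd: "finite (nbhd E v)"
  using graph finite_V by (auto simp: simple_graph_def nbhd_def intro: finite_subset)

lemma nbhd_eq_Un: "nbhd E v = (nbhd E v \<inter> V_plus) \<union> (nbhd E v \<inter> V_minus)"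
  using graph V_eq_Un by (auto simp: simple_graph_def nbhd_def)

lemma deg_eq_plus_deg_add_minus_deg: "deg E v = plus_deg v + minus_deg v"
  unfolding deg_def by (subst nbhd_eq_Un, rule card_Un_disjoint) (auto simp: finite_nbhd)

lemma sum_nbhd_eq: "(\<Sum>u\<in>nbhd E v. f u) = int (plus_deg v) - int (minus_deg v)"
proof -
  have "(\<Sum>u\<in>nbhd E v. f u) = (\<Sum>u\<in>nbhd E v \<inter> V_plus. f u) + (\<Sum>u\<in>nbhd E v \<inter> V_minus. f u)"
    by (subst nbhd_eq_Un, rule sum.union_disjoint) (auto simp: finite_nbhd)
  then show ?thesis
    by simp
qed

lemma minus_deg_less_plus_deg:
  assumes "v \<in> V"
  shows "minus_deg v < plus_deg v"
  using stdf assms sum_nbhd_eq[of v] by (auto simp: stdf_def)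

text \<open>The neighbourhood sum \<open>plus_deg v - minus_deg v\<close> has the parity of \<open>deg E v\<close>.\<close>
lemma minus_deg_add_2_le_plus_deg:
  assumes "v \<in> V" "even (deg E v)"
  shows "minus_deg v + 2 \<le> plus_deg v"
proof -
  have "m + 2 \<le> p" if "m < p" "even (p + m)" for p m :: nat
    using that by presburger
  then show ?thesis
    using minus_deg_less_plus_deg[OF assms(1)] assms(2)
    by (simp add: deg_eq_plus_deg_add_minus_deg)
qed

lemma half_deg_less_plus_deg:
  assumes "v \<in> V"
  shows "deg E v div 2 < plus_deg v"
  using minus_deg_less_plus_deg[OF assms] minus_deg_add_2_le_plus_deg[OF assms]
    deg_eq_plus_deg_add_minus_deg[of v]
  by presburger

lemma minus_deg_less_half_deg:
  assumes "v \<in> V"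
  shows "minus_deg v < (deg E v + 1) div 2"
  using minus_deg_less_plus_deg[OF assms] deg_eq_plus_deg_add_minus_deg[of v] by presburger

lemma cut_size_eq_sum_minus_deg: "cut_size = (\<Sum>v\<in>V_plus. minus_deg v)"
  using finite_V by (intro card_edges_between_disjoint) auto

lemma cut_size_eq_sum_plus_deg: "cut_size = (\<Sum>v\<in>V_minus. plus_deg v)"
  using finite_V edge_sym
  by (subst edges_between_commute, blast) (intro card_edges_between_disjoint, auto)

lemma double_card_induced_edges_plus:
  "2 * card (induced_edges E V_plus) = (\<Sum>v\<in>V_plus. plus_deg v)"
  using finite_V edge_sym edge_irrefl by (intro double_card_induced_edges) auto

lemma double_card_induced_edges_minus:
  "2 * card (induced_edges E V_minus) = (\<Sum>v\<in>V_minus. minus_deg v)"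
  using finite_V edge_sym edge_irrefl by (intro double_card_induced_edges) auto

lemma min_deg_le_deg: "v \<in> V \<Longrightarrow> min_deg V E \<le> deg E v"
  using finite_V by (simp add: min_deg_def)

lemma deg_le_max_deg: "v \<in> V \<Longrightarrow> deg E v \<le> max_deg V E"
  using finite_V by (simp add: max_deg_def)

lemma cut_size_lower_bound: "(min_deg V E div 2 + 1) * card V_minus \<le> cut_size"
proof -
  have "(min_deg V E div 2 + 1) * card V_minus = (\<Sum>v\<in>V_minus. min_deg V E div 2 + 1)"
    by simp
  also have "\<dots> \<le> (\<Sum>v\<in>V_minus. plus_deg v)"
  proof (rule sum_mono)
    fix v assume "v \<in> V_minus"
    then show "min_deg V E div 2 + 1 \<le> plus_deg v"
      using half_deg_less_plus_deg[of v] min_deg_le_deg[of v] by fastforce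
  qed
  finally show ?thesis
    by (simp add: cut_size_eq_sum_plus_deg)
qed

lemma cut_size_upper_bound: "cut_size + card V_plus \<le> ((max_deg V E + 1) div 2) * card V_plus"
proof -
  have "cut_size + card V_plus = (\<Sum>v\<in>V_plus. minus_deg v + 1)"
    by (simp add: cut_size_eq_sum_minus_deg sum_Suc)
  also have "\<dots> \<le> (\<Sum>v\<in>V_plus. (max_deg V E + 1) div 2)"
  proof (rule sum_mono)
    fix v assume "v \<in> V_plus"
    then have "minus_deg v < (deg E v + 1) div 2" "deg E v \<le> max_deg V E"
      using minus_deg_less_half_deg deg_le_max_deg by auto
    then show "minus_deg v + 1 \<le> (max_deg V E + 1) div 2"
      using div_le_mono[of "deg E v + 1" "max_deg V E + 1" 2] by linarith
  qed
  finally show ?thesis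
    by (simp add: mult.commute)
qed

lemma sum_local_difference_plus:
  "(\<Sum>v\<in>V_plus. int (plus_deg v) - int (minus_deg v))
     = 2 * int (card (induced_edges E V_plus)) - int cut_size"
  by (simp add: sum_subtractf cut_size_eq_sum_minus_deg
      flip: of_nat_sum double_card_induced_edges_plus)

lemma sum_local_difference_minus:
  "(\<Sum>v\<in>V_minus. int (plus_deg v) - int (minus_deg v))
     = int cut_size - 2 * int (card (induced_edges E V_minus))"
  by (simp add: sum_subtractf cut_size_eq_sum_plus_deg
      flip: of_nat_sum double_card_induced_edges_minus)

lemma card_add_card_even_deg_le_sum_local_difference:
  "int (card V) + int (card {v \<in> V. even (deg E v)})
     \<le> (\<Sum>v\<in>V. int (plus_deg v) - int (minus_deg v))"
proof -
  have "int (card V) + int (card {v \<in> V. even (deg E v)})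
      = (\<Sum>v\<in>V. 1 + (if even (deg E v) then 1 else 0))"
    using finite_V by (simp add: sum.distrib sum.If_cases Int_def)
  also have "\<dots> \<le> (\<Sum>v\<in>V. int (plus_deg v) - int (minus_deg v))"
    using minus_deg_less_plus_deg minus_deg_add_2_le_plus_deg by (intro sum_mono) fastforce
  finally show ?thesis .
qed

lemma card_minus_le_sum_local_difference:
  "int (card V_minus) \<le> (\<Sum>v\<in>V_minus. int (plus_deg v) - int (minus_deg v))"
proof -
  have "int (card V_minus) = (\<Sum>v\<in>V_minus. 1)"
    by simp
  also have "\<dots> \<le> (\<Sum>v\<in>V_minus. int (plus_deg v) - int (minus_deg v))"
    using minus_deg_less_plus_deg by (intro sum_mono) fastforce
  finally show ?thesis .
qed

lemma edge_count_inequality: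
  "card V + card V_minus + 4 * card (induced_edges E V_minus) + card {v \<in> V. even (deg E v)}
     \<le> 2 * card (induced_edges E V_plus) + cut_size"
proof -
  have "(\<Sum>v\<in>V. int (plus_deg v) - int (minus_deg v))
      = (\<Sum>v\<in>V_plus. int (plus_deg v) - int (minus_deg v))
        + (\<Sum>v\<in>V_minus. int (plus_deg v) - int (minus_deg v))"
    using finite_V by (subst V_eq_Un, intro sum.union_disjoint) auto
  then show ?thesis
    using card_add_card_even_deg_le_sum_local_difference card_minus_le_sum_local_difference
      sum_local_difference_plus sum_local_difference_minus
    by linarith
qed

end

theorem lemma3p1:
  fixes V :: "'a set" and E :: "'a \<Rightarrow> 'a \<Rightarrow> bool" and f :: "'a \<Rightarrow> int"
  assumes "simple_graph V E"
    and "\<forall>v\<in>V. deg E v \<ge> 1"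
    and "stdf V E f"
    and "(\<Sum>v\<in>V. f v) = gamma_st V E"
  defines "Vp \<equiv> {v \<in> V. f v = 1}" and "Vm \<equiv> {v \<in> V. f v = -1}"
  defines "Ep \<equiv> card (induced_edges E Vp)" and "Em \<equiv> card (induced_edges E Vm)"
    and "X \<equiv> card (edges_between E Vp Vm)"
    and "Ve \<equiv> {v \<in> V. even (deg E v)}"
  shows "((\<lfloor>real (min_deg V E) / 2\<rfloor> + 1) * int (card Vm) \<le> int X
         \<and> int X \<le> (\<lceil>real (max_deg V E) / 2\<rceil> - 1) * int (card Vp))
         \<and> card V + card Vm + 4 * Em + card Ve \<le> 2 * Ep + X"
proof -
  interpret stdf_graph V E f
    using assms(1,3) by unfold_locales
  have "int ((min_deg V E div 2 + 1) * card Vm) \<le> int X"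
    unfolding of_nat_le_iff Vm_def X_def Vp_def by (rule cut_size_lower_bound)
  then have lower: "(int (min_deg V E div 2) + 1) * int (card Vm) \<le> int X"
    by (simp add: algebra_simps)
  have "int (X + card Vp) \<le> int ((max_deg V E + 1) div 2 * card Vp)"
    unfolding of_nat_le_iff Vm_def X_def Vp_def by (rule cut_size_upper_bound)
  then have upper: "int X \<le> (int ((max_deg V E + 1) div 2) - 1) * int (card Vp)"
    by (simp add: algebra_simps)
  have count: "card V + card Vm + 4 * Em + card Ve \<le> 2 * Ep + X"
    unfolding Vp_def Vm_def Ep_def Em_def X_def Ve_def by (rule edge_count_inequality)
  show ?thesis
    unfolding floor_half_of_nat ceiling_half_of_nat using lower upper count by blast
qed

end
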